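(* Let $\mathbb{F}$ be a field of characteristic zero, $d\ge 2$, $n\ge 0$, and let $a_{k,j}\in\mathbb{F}$ ($2\le k\le n$, $2\le j\le d$). Let $L_0,\dots,L_n$ be defined by $L_0=1$, $L_1=x_1$ and, for $2\le k\le n$, $$L_k=\Psi_1(M_1)+\sum_{j=2}^d\Psi_j\big((M_j)_{i_1=\dots=i_{j-1}=0}\big)+a_{k,2}x_2+\dots+a_{k,d}x_d,\quad M_1=L_{k-1},\ M_j=\sum_{t=2}^{k-1}a_{t,j}L_{k-t}.$$ Then for every $k=0,1,\dots,n$, $$L_k=\sum\frac{a_{2,2}^{\gamma_{2,2}}\cdots a_{n,2}^{\gamma_{2,n}}\cdots a_{2,d}^{\gamma_{d,2}}\cdots a_{n,d}^{\gamma_{d,n}}}{\gamma_{1,1}!\,\gamma_{2,2}!\cdots\gamma_{2,n}!\cdots\gamma_{d,2}!\cdots\gamma_{d,n}!}\,x_1^{\gamma_{1,1}}x_2^{\gamma_{2,2}+\dots+\gamma_{2,n}}\cdots x_d^{\gamma_{d,2}+\dots+\gamma_{d,n}},$$ where the sum runs over all nonnegative integers $\gamma_{1,1}$, $\gamma_{s,j}$ ($2\le s\le d$, $2\le j\le n$) with $\gamma_{1,1}+2(\gamma_{2,2}+\dots+\gamma_{d,2})+\dots+n(\gamma_{2,n}+\dots+\gamma_{d,n})=k$.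
   Context: $\Psi_j$ is the linear operator on $\mathbb{F}[x_1,\dots,x_d]$ with $\Psi_j(x_1^{\alpha_1}\cdots x_d^{\alpha_d})=\frac{1}{\alpha_j+1}x_1^{\alpha_1}\cdots x_j^{\alpha_j+1}\cdots x_d^{\alpha_d}$; $(M)_{i_1=\dots=i_{j-1}=0}$ is the sum of the terms of $M$ containing none of $x_1,\dots,x_{j-1}$. Convention: $0^0=1$. *)

theory Defs
  imports Complex_Main
begin

text \<open>Polynomials in x_1,...,x_d are represented by their coefficient functions:
  a polynomial is a map from exponent vectors (nat => nat, variable i has exponent e i)
  to coefficients.  Only linear operations are needed.\<close>

type_synonym 'a mpoly_fn = "(nat \<Rightarrow> nat) \<Rightarrow> 'a"

definition unit_vec :: "nat \<Rightarrow> nat \<Rightarrow> nat" where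
  "unit_vec j = (\<lambda>i. if i = j then 1 else 0)"

definition one_poly :: "'a::field mpoly_fn" where
  "one_poly = (\<lambda>\<alpha>. if \<alpha> = (\<lambda>_. 0) then 1 else 0)"

definition var_poly :: "nat \<Rightarrow> 'a::field mpoly_fn" where
  "var_poly j = (\<lambda>\<alpha>. if \<alpha> = unit_vec j then 1 else 0)"

text \<open>Psi_j(x^beta) = x^(beta + e_j) / (beta_j + 1), extended linearly.\<close>
definition Psi :: "nat \<Rightarrow> 'a::field mpoly_fn \<Rightarrow> 'a mpoly_fn" where
  "Psi j p = (\<lambda>\<alpha>. if 1 \<le> \<alpha> j then p (\<alpha>(j := \<alpha> j - 1)) / of_nat (\<alpha> j) else 0)"

text \<open>(M)_{i_1=...=i_{j-1}=0}: keep the terms not containing x_1,...,x_{j-1}.\<close>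
definition restr :: "nat \<Rightarrow> 'a::field mpoly_fn \<Rightarrow> 'a mpoly_fn" where
  "restr j p = (\<lambda>\<alpha>. if (\<forall>i\<in>{1..<j}. \<alpha> i = 0) then p \<alpha> else 0)"

fun Lpoly :: "(nat \<Rightarrow> nat \<Rightarrow> 'a::field_char_0) \<Rightarrow> nat \<Rightarrow> nat \<Rightarrow> 'a mpoly_fn" where
  "Lpoly a d 0 = one_poly"
| "Lpoly a d (Suc 0) = var_poly 1"
| "Lpoly a d (Suc (Suc m)) =
     (\<lambda>\<alpha>. Psi 1 (Lpoly a d (Suc m)) \<alpha>
        + (\<Sum>j=2..d. Psi j (restr j (\<lambda>\<beta>. \<Sum>t=2..Suc m. a t j * Lpoly a d (Suc (Suc m) - t) \<beta>)) \<alpha>)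
        + (\<Sum>j=2..d. a (Suc (Suc m)) j * var_poly j \<alpha>))"

text \<open>Index set of the sum: gamma_{1,1} = c and gamma_{s,j} = g s j for 2<=s<=d, 2<=j<=n
  (g is zero elsewhere), with weighted sum equal to k.\<close>
definition gammas :: "nat \<Rightarrow> nat \<Rightarrow> nat \<Rightarrow> (nat \<times> (nat \<Rightarrow> nat \<Rightarrow> nat)) set" where
  "gammas d n k = {(c, g). (\<forall>s j. (s \<notin> {2..d} \<or> j \<notin> {2..n}) \<longrightarrow> g s j = 0)
       \<and> c + (\<Sum>j=2..n. j * (\<Sum>s=2..d. g s j)) = k}"

definition gamma_exp :: "nat \<Rightarrow> nat \<Rightarrow> nat \<Rightarrow> (nat \<Rightarrow> nat \<Rightarrow> nat) \<Rightarrow> nat \<Rightarrow> nat" where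
  "gamma_exp d n c g = (\<lambda>i. if i = 1 then c else if 2 \<le> i \<and> i \<le> d then (\<Sum>j=2..n. g i j) else 0)"

definition gamma_coeff :: "(nat \<Rightarrow> nat \<Rightarrow> 'a::field_char_0) \<Rightarrow> nat \<Rightarrow> nat \<Rightarrow> nat \<Rightarrow> (nat \<Rightarrow> nat \<Rightarrow> nat) \<Rightarrow> 'a" where
  "gamma_coeff a d n c g =
     (\<Prod>s=2..d. \<Prod>j=2..n. a j s ^ g s j)
     / (fact c * (\<Prod>s=2..d. \<Prod>j=2..n. fact (g s j)))"

definition closed_form :: "(nat \<Rightarrow> nat \<Rightarrow> 'a::field_char_0) \<Rightarrow> nat \<Rightarrow> nat \<Rightarrow> nat \<Rightarrow> 'a mpoly_fn" where
  "closed_form a d n k = (\<lambda>\<alpha>. \<Sum>(c, g)\<in>gammas d n k.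
       if \<alpha> = gamma_exp d n c g then gamma_coeff a d n c g else 0)"

end

theory Submission
  imports Defs "HOL-Library.FuncSet"
begin

text \<open>Write \<open>\<partial>\<^sub>j\<close> for the partial derivative. On monomials containing \<open>x\<^sub>j\<close>, \<open>\<Psi>\<^sub>j\<close> inverts \<open>\<partial>\<^sub>j\<close>;
  sorting the monomials of a polynomial \<open>p\<close> without constant term by their first variable
  therefore gives \<open>p = \<Psi>\<^sub>1(\<partial>\<^sub>1 p) + \<Sum>\<^sub>j \<Psi>\<^sub>j((\<partial>\<^sub>j p)\<^sub>i\<^sub>1\<^sub>=\<^sub>\<dots>\<^sub>=\<^sub>i\<^sub>j\<^sub>-\<^sub>1\<^sub>=\<^sub>0)\<close>.
  For the closed form \<open>C\<^sub>k\<close> one computes \<open>\<partial>\<^sub>1 C\<^sub>k = C\<^sub>k\<^sub>-\<^sub>1\<close> and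
  \<open>\<partial>\<^sub>j C\<^sub>k = \<Sum>\<^sub>t a\<^sub>t\<^sub>,\<^sub>j C\<^sub>k\<^sub>-\<^sub>t\<close> (differentiating in \<open>x\<^sub>j\<close> lowers one \<open>\<gamma>\<^sub>j\<^sub>,\<^sub>t\<close> by one, which
  lowers the weight by \<open>t\<close>), so \<open>C\<^sub>k\<close> obeys the recursion defining \<open>L\<^sub>k\<close>.\<close>

definition partial_deriv :: "nat \<Rightarrow> 'a::field mpoly_fn \<Rightarrow> 'a mpoly_fn" where
  "partial_deriv j p = (\<lambda>\<alpha>. of_nat (Suc (\<alpha> j)) * p (\<alpha>(j := Suc (\<alpha> j))))"

lemma Psi_eq_0: "\<alpha> j = 0 \<Longrightarrow> Psi j p \<alpha> = 0"
  by (simp add: Psi_def)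

lemma Psi_restr_eq_0: "i \<in> {1..<j} \<Longrightarrow> \<alpha> i \<noteq> 0 \<Longrightarrow> Psi j (restr j p) \<alpha> = 0"
  by (auto simp: Psi_def restr_def)

lemma Psi_restr_eq_Psi: "\<forall>i\<in>{1..<j}. \<alpha> i = 0 \<Longrightarrow> Psi j (restr j p) \<alpha> = Psi j p \<alpha>"
  by (auto simp: Psi_def restr_def)

lemma Psi_partial_deriv:
  fixes p :: "'a::field_char_0 mpoly_fn"
  assumes "\<alpha> j \<noteq> 0"
  shows "Psi j (partial_deriv j p) \<alpha> = p \<alpha>"
proof -
  have "\<alpha>(j := \<alpha> j - 1, j := Suc (\<alpha> j - 1)) = \<alpha>" using assms by auto
  with assms show ?thesis by (simp add: Psi_def partial_deriv_def)
qed

lemma eq_sum_Psi_restr_partial_deriv: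
  fixes p :: "'a::field_char_0 mpoly_fn"
  assumes "1 \<le> d" and const: "(\<forall>i\<in>{1..d}. \<alpha> i = 0) \<Longrightarrow> p \<alpha> = 0"
  shows "p \<alpha> = (\<Sum>i=1..d. Psi i (restr i (partial_deriv i p)) \<alpha>)"
proof (cases "\<forall>i\<in>{1..d}. \<alpha> i = 0")
  case True
  then show ?thesis using const by (simp add: Psi_eq_0)
next
  case False
  define j where "j = (LEAST i. i \<in> {1..d} \<and> \<alpha> i \<noteq> 0)"
  have j: "j \<in> {1..d} \<and> \<alpha> j \<noteq> 0"
    using False unfolding j_def by (metis (mono_tags, lifting) LeastI)
  have below: "\<alpha> i = 0" if "i \<in> {1..<j}" for i
    using that j not_less_Least[of i "\<lambda>i. i \<in> {1..d} \<and> \<alpha> i \<noteq> 0"]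
    unfolding j_def by auto
  have others: "Psi i (restr i (partial_deriv i p)) \<alpha> = 0" if "i \<in> {1..d} - {j}" for i
  proof (cases "i < j")
    case True
    then show ?thesis using that below by (intro Psi_eq_0) auto
  next
    case False
    then show ?thesis using that j by (intro Psi_restr_eq_0[of j]) auto
  qed
  have "(\<Sum>i=1..d. Psi i (restr i (partial_deriv i p)) \<alpha>) = Psi j (restr j (partial_deriv j p)) \<alpha>"
    using j others by (simp add: sum.remove[of _ j] sum.neutral)
  also have "\<dots> = p \<alpha>"
    using below j by (simp add: Psi_restr_eq_Psi Psi_partial_deriv)
  finally show ?thesis ..
qed

lemma Psi_restr_linear:
  "Psi j (restr j (\<lambda>\<beta>. p \<beta> + c * q \<beta>)) \<alpha> = Psi j (restr j p) \<alpha> + c * Psi j (restr j q) \<alpha>"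
  by (simp add: Psi_def restr_def add_divide_distrib)

lemma restr_one_poly: "restr j one_poly = one_poly"
  by (auto simp: restr_def one_poly_def fun_eq_iff)

lemma Psi_one_poly: "Psi j one_poly = var_poly j"
  by (auto simp: Psi_def one_poly_def var_poly_def unit_vec_def fun_eq_iff split: if_splits)

lemma Psi_restr_zero: "Psi j (restr j (\<lambda>_. 0)) = (\<lambda>_. 0)"
  by (simp add: Psi_def restr_def fun_eq_iff)

definition weight :: "nat \<Rightarrow> nat \<Rightarrow> (nat \<Rightarrow> nat \<Rightarrow> nat) \<Rightarrow> nat" where
  "weight d n g = (\<Sum>j=2..n. j * (\<Sum>s=2..d. g s j))"

definition supported :: "nat \<Rightarrow> nat \<Rightarrow> (nat \<Rightarrow> nat \<Rightarrow> nat) \<Rightarrow> bool" where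
  "supported d n g \<longleftrightarrow> (\<forall>s j. (s \<notin> {2..d} \<or> j \<notin> {2..n}) \<longrightarrow> g s j = 0)"

lemma mem_gammas_iff: "(c, g) \<in> gammas d n k \<longleftrightarrow> supported d n g \<and> c + weight d n g = k"
  by (simp add: gammas_def supported_def weight_def)

lemma mult_le_weight:
  assumes "s \<in> {2..d}" "j \<in> {2..n}"
  shows "j * g s j \<le> weight d n g"
proof -
  have "j * g s j \<le> j * (\<Sum>s'=2..d. g s' j)"
    using assms(1) by (intro mult_le_mono2 member_le_sum) auto
  also have "\<dots> \<le> weight d n g"
    unfolding weight_def using assms(2)
    by (intro member_le_sum[where f = "\<lambda>j. j * (\<Sum>s'=2..d. g s' j)"]) auto
  finally show ?thesis .
qed

lemma finite_gammas: "finite (gammas d n k)"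
proof -
  let ?I = "{2..d} \<times> {2..n}"
  let ?ext = "\<lambda>f s j. if (s, j) \<in> ?I then f (s, j) else (0::nat)"
  have "gammas d n k \<subseteq> {..k} \<times> (?ext ` PiE ?I (\<lambda>_. {..k}))"
  proof (clarify)
    fix c g assume cg: "(c, g) \<in> gammas d n k"
    have "g s j \<le> k" if "s \<in> {2..d}" "j \<in> {2..n}" for s j
    proof -
      have "g s j \<le> j * g s j" using that(2) by simp
      also have "\<dots> \<le> weight d n g" using that by (rule mult_le_weight)
      finally show ?thesis using cg by (simp add: mem_gammas_iff)
    qed
    then have "restrict (\<lambda>(s, j). g s j) ?I \<in> PiE ?I (\<lambda>_. {..k})" by auto
    moreover have "g = ?ext (restrict (\<lambda>(s, j). g s j) ?I)"
      using cg by (auto simp: mem_gammas_iff supported_def fun_eq_iff)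
    ultimately have "g \<in> ?ext ` PiE ?I (\<lambda>_. {..k})" by (intro image_eqI)
    then show "c \<in> {..k} \<and> g \<in> ?ext ` PiE ?I (\<lambda>_. {..k})"
      using cg by (simp add: mem_gammas_iff)
  qed
  then show ?thesis by (rule finite_subset) (intro finite_cartesian_product finite_imageI finite_PiE; simp)
qed

lemma gamma_exp_eq_fun_upd: "gamma_exp d n c g = (gamma_exp d n 0 g)(1 := c)"
  by (simp add: gamma_exp_def fun_eq_iff)

lemma gamma_exp_eq_iff:
  "gamma_exp d n c g = \<alpha> \<longleftrightarrow> c = \<alpha> 1 \<and> gamma_exp d n 0 g = \<alpha>(1 := 0)"
proof -
  have "gamma_exp d n 0 g 1 = 0" by (simp add: gamma_exp_def)
  then have "gamma_exp d n 0 g = (gamma_exp d n 0 g)(1 := 0)" by (metis fun_upd_triv)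
  then show ?thesis by (metis fun_upd_same fun_upd_upd gamma_exp_eq_fun_upd fun_upd_triv)
qed

text \<open>The terms of the closed form at the monomial \<open>x\<^sup>\<alpha>\<close> all have \<open>\<gamma>\<^sub>1\<^sub>,\<^sub>1 = \<alpha> 1\<close>; they are
  indexed by the remaining exponents \<open>g\<close> alone.\<close>
definition gamma_tails :: "nat \<Rightarrow> nat \<Rightarrow> nat \<Rightarrow> nat \<Rightarrow> (nat \<Rightarrow> nat) \<Rightarrow> (nat \<Rightarrow> nat \<Rightarrow> nat) set" where
  "gamma_tails d n k c \<beta> = {g. (c, g) \<in> gammas d n k \<and> gamma_exp d n 0 g = \<beta>}"

lemma finite_gamma_tails: "finite (gamma_tails d n k c \<beta>)"
proof (rule finite_subset)
  show "gamma_tails d n k c \<beta> \<subseteq> snd ` gammas d n k"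
    by (force simp: gamma_tails_def)
qed (simp add: finite_gammas)

lemma closed_form_eq_sum_gamma_tails:
  "closed_form a d n k \<alpha> = (\<Sum>g\<in>gamma_tails d n k (\<alpha> 1) (\<alpha>(1 := 0)). gamma_coeff a d n (\<alpha> 1) g)"
proof -
  have "closed_form a d n k \<alpha>
      = (\<Sum>x\<in>{x\<in>gammas d n k. gamma_exp d n (fst x) (snd x) = \<alpha>}. gamma_coeff a d n (fst x) (snd x))"
    unfolding closed_form_def
    by (subst sum.inter_filter[OF finite_gammas], rule sum.cong) (auto simp: case_prod_beta')
  also have "{x\<in>gammas d n k. gamma_exp d n (fst x) (snd x) = \<alpha>}
      = Pair (\<alpha> 1) ` gamma_tails d n k (\<alpha> 1) (\<alpha>(1 := 0))"
    by (auto simp: gamma_tails_def gamma_exp_eq_iff[where \<alpha> = \<alpha>])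
  also have "(\<Sum>x\<in>Pair (\<alpha> 1) ` gamma_tails d n k (\<alpha> 1) (\<alpha>(1 := 0)). gamma_coeff a d n (fst x) (snd x))
      = (\<Sum>g\<in>gamma_tails d n k (\<alpha> 1) (\<alpha>(1 := 0)). gamma_coeff a d n (\<alpha> 1) g)"
    by (simp add: sum.reindex inj_on_def)
  finally show ?thesis .
qed

lemma gamma_tails_Suc: "gamma_tails d n (Suc k) (Suc c) \<beta> = gamma_tails d n k c \<beta>"
  by (simp add: gamma_tails_def mem_gammas_iff)

lemma gamma_coeff_Suc:
  "of_nat (Suc c) * gamma_coeff a d n (Suc c) g = gamma_coeff a d n c g"
proof -
  have "(\<Prod>s=2..d. \<Prod>j=2..n. fact (g s j) :: 'a) \<noteq> 0" by (simp add: prod_zero_iff)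
  then show ?thesis by (simp add: gamma_coeff_def field_simps del: of_nat_Suc)
qed

lemma partial_deriv_1_closed_form:
  "partial_deriv 1 (closed_form a d n (Suc k)) = closed_form a d n k"
proof
  fix \<alpha>
  have "partial_deriv 1 (closed_form a d n (Suc k)) \<alpha>
      = of_nat (Suc (\<alpha> 1)) * (\<Sum>g\<in>gamma_tails d n k (\<alpha> 1) (\<alpha>(1 := 0)). gamma_coeff a d n (Suc (\<alpha> 1)) g)"
    by (simp add: partial_deriv_def closed_form_eq_sum_gamma_tails gamma_tails_Suc)
  also have "\<dots> = closed_form a d n k \<alpha>"
    by (simp add: sum_distrib_left gamma_coeff_Suc closed_form_eq_sum_gamma_tails del: of_nat_Suc)
  finally show "partial_deriv 1 (closed_form a d n (Suc k)) \<alpha> = closed_form a d n k \<alpha>" .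
qed

lemma sum_row_eq_sum_upto:
  assumes "(c, g) \<in> gammas d n k" "s \<in> {2..d}" "k \<le> n"
  shows "(\<Sum>j=2..n. g s j) = (\<Sum>j=2..k. g s j)"
proof (rule sum.mono_neutral_right)
  show "\<forall>j\<in>{2..n} - {2..k}. g s j = 0"
  proof
    fix j assume j: "j \<in> {2..n} - {2..k}"
    have "j * g s j \<le> k"
      using mult_le_weight[OF assms(2), of j n g] assms(1) j by (simp add: mem_gammas_iff)
    with j show "g s j = 0" by (cases "g s j") auto
  qed
qed (use assms in auto)

definition bump :: "(nat \<Rightarrow> nat \<Rightarrow> nat) \<Rightarrow> nat \<Rightarrow> nat \<Rightarrow> nat \<Rightarrow> nat \<Rightarrow> nat" where
  "bump g s t = (\<lambda>x y. g x y + (if x = s \<and> y = t then 1 else 0))"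

lemma inj_on_bump: "inj_on (\<lambda>g. bump g s t) A"
  by (auto simp: inj_on_def bump_def fun_eq_iff)

lemma supported_bump:
  "supported d n g \<Longrightarrow> s \<in> {2..d} \<Longrightarrow> t \<in> {2..n} \<Longrightarrow> supported d n (bump g s t)"
  by (auto simp: supported_def bump_def)

lemma weight_bump:
  assumes "s \<in> {2..d}" "t \<in> {2..n}"
  shows "weight d n (bump g s t) = weight d n g + t"
proof -
  have col: "(\<Sum>s'=2..d. bump g s t s' j) = (\<Sum>s'=2..d. g s' j) + (if j = t then 1 else 0)" for j
    using assms(1) by (cases "j = t") (simp_all add: bump_def sum.distrib)
  have "weight d n (bump g s t) = weight d n g + (\<Sum>j=2..n. j * (if j = t then 1 else 0))"
    by (simp add: weight_def col distrib_left sum.distrib)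
  also have "(\<Sum>j=2..n. j * (if j = t then 1 else 0)) = t"
    using assms(2) by (simp add: if_distrib cong: if_cong)
  finally show ?thesis .
qed

lemma gamma_exp_bump:
  assumes "s \<in> {2..d}" "t \<in> {2..n}"
  shows "gamma_exp d n c (bump g s t) = (gamma_exp d n c g)(s := Suc (gamma_exp d n c g s))"
  using assms by (auto simp: gamma_exp_def bump_def fun_eq_iff sum.distrib)

lemma bump_image_gamma_tails:
  assumes s: "s \<in> {2..d}" and t: "t \<in> {2..n}" "t \<le> k"
  shows "(\<lambda>g. bump g s t) ` gamma_tails d n (k - t) c \<beta>
       = {g \<in> gamma_tails d n k c (\<beta>(s := Suc (\<beta> s))). 1 \<le> g s t}"
proof (intro equalityI subsetI)
  fix g assume "g \<in> (\<lambda>g. bump g s t) ` gamma_tails d n (k - t) c \<beta>"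
  then obtain h where h: "h \<in> gamma_tails d n (k - t) c \<beta>" and g: "g = bump h s t" by blast
  then show "g \<in> {g \<in> gamma_tails d n k c (\<beta>(s := Suc (\<beta> s))). 1 \<le> g s t}"
    using t s supported_bump weight_bump gamma_exp_bump
    by (auto simp: gamma_tails_def mem_gammas_iff bump_def)
next
  fix g assume g: "g \<in> {g \<in> gamma_tails d n k c (\<beta>(s := Suc (\<beta> s))). 1 \<le> g s t}"
  define h where "h = (\<lambda>x y. g x y - (if x = s \<and> y = t then 1 else 0))"
  have g_eq: "g = bump h s t" using g by (auto simp: h_def bump_def fun_eq_iff)
  have "supported d n h" using g by (auto simp: gamma_tails_def mem_gammas_iff supported_def h_def)
  moreover have "c + weight d n h = k - t"
    using g t weight_bump[OF s t(1), of h] by (auto simp: gamma_tails_def mem_gammas_iff g_eq[symmetric])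
  moreover have "gamma_exp d n 0 h = \<beta>"
  proof -
    have "(gamma_exp d n 0 h)(s := Suc (gamma_exp d n 0 h s)) = \<beta>(s := Suc (\<beta> s))"
      using g gamma_exp_bump[OF s t(1), of 0 h] by (simp add: gamma_tails_def g_eq[symmetric])
    then show ?thesis by (auto simp: fun_eq_iff split: if_splits)
  qed
  ultimately have "h \<in> gamma_tails d n (k - t) c \<beta>" by (simp add: gamma_tails_def mem_gammas_iff)
  with g_eq show "g \<in> (\<lambda>g. bump g s t) ` gamma_tails d n (k - t) c \<beta>" by blast
qed

lemma prod_prod_delta:
  assumes "finite S" "finite T" "s \<in> S" "t \<in> T"
  shows "(\<Prod>x\<in>S. \<Prod>y\<in>T. if x = s \<and> y = t then v else 1) = v"
proof -
  have "(\<Prod>y\<in>T. if x = s \<and> y = t then v else 1) = (if x = s then v else 1)" for x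
    using assms(2,4) by (auto simp: prod.delta')
  then show ?thesis using assms(1,3) by (simp add: prod.delta')
qed

lemma gamma_coeff_bump:
  assumes "s \<in> {2..d}" "t \<in> {2..n}"
  shows "of_nat (Suc (g s t)) * gamma_coeff a d n c (bump g s t) = a t s * gamma_coeff a d n c g"
proof -
  let ?P = "\<lambda>g. \<Prod>x=2..d. \<Prod>j=2..n. a j x ^ g x j"
  let ?F = "\<lambda>g. \<Prod>x=2..d. \<Prod>j=2..n. fact (g x j) :: 'a"
  have "?P (bump g s t) = (\<Prod>x=2..d. \<Prod>j=2..n. a j x ^ g x j * (if x = s \<and> j = t then a t s else 1))"
    by (intro prod.cong refl) (auto simp: bump_def)
  also have "\<dots> = ?P g * a t s"
    using assms by (simp add: prod.distrib prod_prod_delta)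
  finally have P: "?P (bump g s t) = ?P g * a t s" .
  have "?F (bump g s t)
      = (\<Prod>x=2..d. \<Prod>j=2..n. fact (g x j) * (if x = s \<and> j = t then of_nat (Suc (g s t)) else 1))"
    by (intro prod.cong refl) (auto simp: bump_def algebra_simps)
  also have "\<dots> = ?F g * of_nat (Suc (g s t))"
    using assms by (simp add: prod.distrib prod_prod_delta)
  finally have F: "?F (bump g s t) = ?F g * of_nat (Suc (g s t))" .
  have "?F g \<noteq> 0" by (simp add: prod_zero_iff)
  then show ?thesis
    unfolding gamma_coeff_def P F by (simp add: field_simps del: of_nat_Suc)
qed

lemma partial_deriv_closed_form:
  assumes s: "s \<in> {2..d}" and "k \<le> n"
  shows "partial_deriv s (closed_form a d n k) \<alpha> = (\<Sum>t=2..k. a t s * closed_form a d n (k - t) \<alpha>)"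
proof -
  define \<beta> where "\<beta> = \<alpha>(1 := 0)"
  define T where "T = gamma_tails d n k (\<alpha> 1) (\<beta>(s := Suc (\<beta> s)))"
  let ?co = "gamma_coeff a d n (\<alpha> 1)"
  have "s \<noteq> 1" using s by auto
  have row: "of_nat (Suc (\<alpha> s)) = (\<Sum>t=2..k. of_nat (g s t) :: 'a)" if "g \<in> T" for g
  proof -
    have "Suc (\<alpha> s) = gamma_exp d n 0 g s"
      using that \<open>s \<noteq> 1\<close> by (simp add: T_def gamma_tails_def \<beta>_def)
    also have "\<dots> = (\<Sum>j=2..n. g s j)"
      using s by (simp add: gamma_exp_def)
    also have "\<dots> = (\<Sum>j=2..k. g s j)"
      using that s assms(2) by (intro sum_row_eq_sum_upto[of "\<alpha> 1" g d]) (simp_all add: T_def gamma_tails_def)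
    finally show ?thesis by simp
  qed
  have column: "(\<Sum>g\<in>T. of_nat (g s t) * ?co g) = a t s * closed_form a d n (k - t) \<alpha>"
    if t: "t \<in> {2..k}" for t
  proof -
    have tn: "t \<in> {2..n}" using t assms(2) by auto
    have "(\<Sum>g\<in>T. of_nat (g s t) * ?co g) = (\<Sum>g\<in>{g\<in>T. 1 \<le> g s t}. of_nat (g s t) * ?co g)"
      by (rule sum.mono_neutral_right) (auto simp: T_def finite_gamma_tails)
    also have "{g\<in>T. 1 \<le> g s t} = (\<lambda>h. bump h s t) ` gamma_tails d n (k - t) (\<alpha> 1) \<beta>"
      unfolding T_def using t by (intro bump_image_gamma_tails[OF s tn, symmetric]) simp
    also have "(\<Sum>g\<in>(\<lambda>h. bump h s t) ` gamma_tails d n (k - t) (\<alpha> 1) \<beta>. of_nat (g s t) * ?co g)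
        = (\<Sum>h\<in>gamma_tails d n (k - t) (\<alpha> 1) \<beta>. of_nat (bump h s t s t) * ?co (bump h s t))"
      by (simp only: sum.reindex[OF inj_on_bump] comp_def)
    also have "\<dots> = (\<Sum>h\<in>gamma_tails d n (k - t) (\<alpha> 1) \<beta>. a t s * ?co h)"
      using s tn by (intro sum.cong refl) (simp add: bump_def gamma_coeff_bump[symmetric])
    also have "\<dots> = a t s * closed_form a d n (k - t) \<alpha>"
      by (simp add: closed_form_eq_sum_gamma_tails \<beta>_def sum_distrib_left)
    finally show ?thesis .
  qed
  have "partial_deriv s (closed_form a d n k) \<alpha> = of_nat (Suc (\<alpha> s)) * sum ?co T"
    using \<open>s \<noteq> 1\<close> by (simp add: partial_deriv_def closed_form_eq_sum_gamma_tails T_def \<beta>_def fun_upd_twist)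
  also have "\<dots> = (\<Sum>g\<in>T. \<Sum>t=2..k. of_nat (g s t) * ?co g)"
    unfolding sum_distrib_left by (intro sum.cong refl) (simp add: row sum_distrib_right del: of_nat_Suc)
  also have "\<dots> = (\<Sum>t=2..k. a t s * closed_form a d n (k - t) \<alpha>)"
    by (subst sum.swap) (intro sum.cong refl column)
  finally show ?thesis .
qed

lemma gammas_0: "gammas d n 0 = {(0, \<lambda>_ _. 0)}"
proof -
  have "g = (\<lambda>_ _. 0)" if "supported d n g" "weight d n g = 0" for g
  proof (intro ext)
    fix s j
    show "g s j = 0"
    proof (cases "s \<in> {2..d} \<and> j \<in> {2..n}")
      case True
      then have "j * g s j = 0" using mult_le_weight[of s d j n g] that(2) by simp
      with True show ?thesis by simp
    qed (use that(1) in \<open>auto simp: supported_def\<close>)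
  qed
  then show ?thesis by (auto simp: mem_gammas_iff supported_def weight_def)
qed

lemma closed_form_0: "closed_form a d n 0 = one_poly"
proof -
  have "gamma_exp d n 0 (\<lambda>_ _. 0) = (\<lambda>_. 0)" by (simp add: gamma_exp_def fun_eq_iff)
  moreover have "gamma_coeff a d n 0 (\<lambda>_ _. 0) = 1" by (simp add: gamma_coeff_def)
  ultimately show ?thesis by (simp add: closed_form_def gammas_0 one_poly_def fun_eq_iff)
qed

lemma closed_form_eq_0_at_constant:
  assumes "1 \<le> k" "1 \<le> d" "\<forall>i\<in>{1..d}. \<alpha> i = 0"
  shows "closed_form a d n k \<alpha> = 0"
proof -
  have "gamma_tails d n k (\<alpha> 1) (\<alpha>(1 := 0)) = {}"
  proof (intro equals0I)
    fix g assume g: "g \<in> gamma_tails d n k (\<alpha> 1) (\<alpha>(1 := 0))"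
    have "g s j = 0" if "s \<in> {2..d}" "j \<in> {2..n}" for s j
    proof -
      have "gamma_exp d n 0 g s = \<alpha> s" using g that by (auto simp: gamma_tails_def)
      then have "(\<Sum>j=2..n. g s j) = \<alpha> s" using that by (simp add: gamma_exp_def)
      with that assms(3) show ?thesis by simp
    qed
    then have "weight d n g = 0" by (simp add: weight_def)
    with g assms show False by (simp add: gamma_tails_def mem_gammas_iff)
  qed
  then show ?thesis by (simp add: closed_form_eq_sum_gamma_tails)
qed

lemma closed_form_Suc:
  assumes "2 \<le> d" "Suc m \<le> n"
  shows "closed_form a d n (Suc m) \<alpha> = Psi 1 (closed_form a d n m) \<alpha>
     + (\<Sum>j=2..d. Psi j (restr j (\<lambda>\<beta>. \<Sum>t=2..Suc m. a t j * closed_form a d n (Suc m - t) \<beta>)) \<alpha>)"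
proof -
  have deriv: "partial_deriv j (closed_form a d n (Suc m))
      = (\<lambda>\<beta>. \<Sum>t=2..Suc m. a t j * closed_form a d n (Suc m - t) \<beta>)" if "j \<in> {2..d}" for j
    by (intro ext partial_deriv_closed_form[OF that assms(2)])
  have "closed_form a d n (Suc m) \<alpha>
      = (\<Sum>j=1..d. Psi j (restr j (partial_deriv j (closed_form a d n (Suc m)))) \<alpha>)"
    using assms(1) closed_form_eq_0_at_constant[of "Suc m" d \<alpha>]
    by (intro eq_sum_Psi_restr_partial_deriv) auto
  also have "\<dots> = Psi 1 (partial_deriv 1 (closed_form a d n (Suc m))) \<alpha>
      + (\<Sum>j=2..d. Psi j (restr j (partial_deriv j (closed_form a d n (Suc m)))) \<alpha>)"
    using assms(1) by (subst sum.atLeast_Suc_atMost) (simp_all add: numeral_2_eq_2 restr_def)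
  also have "(\<Sum>j=2..d. Psi j (restr j (partial_deriv j (closed_form a d n (Suc m)))) \<alpha>)
      = (\<Sum>j=2..d. Psi j (restr j (\<lambda>\<beta>. \<Sum>t=2..Suc m. a t j * closed_form a d n (Suc m - t) \<beta>)) \<alpha>)"
    by (intro sum.cong refl) (simp only: deriv)
  finally show ?thesis by (simp only: partial_deriv_1_closed_form)
qed

lemma Lpoly_Suc:
  "Lpoly a d (Suc m) \<alpha> = Psi 1 (Lpoly a d m) \<alpha>
     + (\<Sum>j=2..d. Psi j (restr j (\<lambda>\<beta>. \<Sum>t=2..Suc m. a t j * Lpoly a d (Suc m - t) \<beta>)) \<alpha>)"
proof (cases m)
  case 0
  then show ?thesis by (simp add: Psi_one_poly Psi_restr_zero)
next
  case (Suc m')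
  have last: "(\<Sum>t=2..Suc (Suc m'). a t j * Lpoly a d (Suc (Suc m') - t) \<beta>)
      = (\<Sum>t=2..Suc m'. a t j * Lpoly a d (Suc (Suc m') - t) \<beta>) + a (Suc (Suc m')) j * one_poly \<beta>"
    for j \<beta> by simp
  show ?thesis unfolding Suc last
    by (simp add: Psi_restr_linear restr_one_poly Psi_one_poly sum.distrib)
qed

theorem corollary6:
  fixes a :: "nat \<Rightarrow> nat \<Rightarrow> 'a::field_char_0" and d n k :: nat
  assumes "2 \<le> d" and "k \<le> n"
  shows "Lpoly a d k = closed_form a d n k"
  using assms(2)
proof (induction k rule: less_induct)
  case (less k)
  show ?case
  proof (cases k)
    case 0
    then show ?thesis by (simp add: closed_form_0)
  next
    case (Suc m)
    have lower: "(\<lambda>\<beta>. \<Sum>t=2..Suc m. a t j * Lpoly a d (Suc m - t) \<beta>)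
        = (\<lambda>\<beta>. \<Sum>t=2..Suc m. a t j * closed_form a d n (Suc m - t) \<beta>)" for j
      using Suc less by (intro ext sum.cong refl) simp
    show ?thesis
      using Suc less by (intro ext) (simp add: Lpoly_Suc closed_form_Suc[OF assms(1)] lower)
  qed
qed

end
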